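(* Let $D$ be a Euclidean domain with fraction field $K$, and let $R$ be the subring of $K$ generated by $\{1/d \mid d \in D\setminus\{0\}\}$. If $D \not\subseteq R$ (equivalently, $R \neq K$), then $R \cap D$ equals the set of units of $D$ together with $0$. In particular, the units of $D$ together with $0$ form a field contained in $D$.
   Context: A Euclidean function on an integral domain $D$ is a function $f: D\setminus\{0\} \to \mathbb{Z}$ such that for all nonzero $a,b \in D$: (1) $f(ab) \geq f(a)$, and (2) there exist $q,r \in D$ with $b = aq + r$ and either $r=0$ or $f(r) < f(a)$. A Euclidean domain is an integral domain admitting a Euclidean function. *)

theory Defs
  imports "HOL-Computational_Algebra.Fraction_Field"
begin

text \<open>Euclidean function on an integral domain, exactly as in the paper:
  integer-valued on nonzero elements (values at 0 are irrelevant).\<close>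
definition euclidean_function :: "('a::idom \<Rightarrow> int) \<Rightarrow> bool" where
  "euclidean_function f \<longleftrightarrow>
     (\<forall>a b. a \<noteq> 0 \<longrightarrow> b \<noteq> 0 \<longrightarrow>
        f (a * b) \<ge> f a \<and>
        (\<exists>q r. b = a * q + r \<and> (r = 0 \<or> f r < f a)))"

definition euclidean_domain :: "'a::idom itself \<Rightarrow> bool" where
  "euclidean_domain _ \<longleftrightarrow> (\<exists>f::'a \<Rightarrow> int. euclidean_function f)"

definition emb :: "'a::idom \<Rightarrow> 'a fract" where
  "emb a = Fract a 1"

definition subring_generated :: "'b::comm_ring_1 set \<Rightarrow> 'b set" where
  "subring_generated S = \<Inter>{T. S \<subseteq> T \<and> 1 \<in> T \<and>
      (\<forall>x\<in>T. \<forall>y\<in>T. x + y \<in> T \<and> x - y \<in> T \<and> x * y \<in> T)}"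

definition inv_ring :: "'a::idom fract set" where
  "inv_ring = subring_generated {1 / emb d | d. d \<noteq> 0}"

end

theory Submission
  imports Defs
begin

text \<open>Suppose some nonzero nonunit \<open>a\<close> of \<open>D\<close> lies in \<open>R\<close>. Multiplying by a nonunit strictly
  increases a Euclidean function \<open>f\<close>, so \<open>f (a ^ n) \<ge> f 1 + n\<close>. Given \<open>b \<noteq> 0\<close>, divide
  \<open>a ^ n\<close> by \<open>b\<close> with \<open>n = f b - f 1\<close>: the quotient \<open>q\<close> is nonzero because \<open>f (a ^ n) \<ge> f b\<close>,
  and the remainder lies in \<open>R\<close> by induction on \<open>f b\<close>. Hence \<open>b * q \<in> R\<close>, and multiplying
  by \<open>1 / q \<in> R\<close> gives \<open>b \<in> R\<close>, i.e. \<open>D \<subseteq> R\<close>. Conversely every unit \<open>u\<close> lies in \<open>R\<close>, being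
  the inverse of \<open>1 / u\<close>.\<close>

lemma subring_generated_superset: "S \<subseteq> subring_generated S"
  unfolding subring_generated_def by blast

lemma one_in_subring_generated: "1 \<in> subring_generated S"
  unfolding subring_generated_def by blast

lemma subring_generated_closed:
  assumes "x \<in> subring_generated S" "y \<in> subring_generated S"
  shows "x + y \<in> subring_generated S" "x - y \<in> subring_generated S"
    "x * y \<in> subring_generated S"
  using assms unfolding subring_generated_def by blast+

lemma inv_ring_one: "1 \<in> inv_ring"
  unfolding inv_ring_def by (rule one_in_subring_generated)

lemma inv_ring_add: "x \<in> inv_ring \<Longrightarrow> y \<in> inv_ring \<Longrightarrow> x + y \<in> inv_ring"
  and inv_ring_diff: "x \<in> inv_ring \<Longrightarrow> y \<in> inv_ring \<Longrightarrow> x - y \<in> inv_ring"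
  and inv_ring_mult: "x \<in> inv_ring \<Longrightarrow> y \<in> inv_ring \<Longrightarrow> x * y \<in> inv_ring"
  unfolding inv_ring_def by (fact subring_generated_closed)+

lemma inv_ring_zero: "0 \<in> inv_ring"
  using inv_ring_diff[OF inv_ring_one inv_ring_one] by simp

lemma inv_ring_power: "x \<in> inv_ring \<Longrightarrow> x ^ n \<in> inv_ring"
  by (induction n) (simp_all add: inv_ring_one inv_ring_mult)

lemma inverse_emb_in_inv_ring: "d \<noteq> 0 \<Longrightarrow> 1 / emb d \<in> inv_ring"
  unfolding inv_ring_def by (rule subsetD[OF subring_generated_superset]) blast

lemma emb_0 [simp]: "emb 0 = 0"
  and emb_1 [simp]: "emb 1 = 1"
  and emb_add: "emb (a + b) = emb a + emb b"
  and emb_diff: "emb (a - b) = emb a - emb b"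
  and emb_mult: "emb (a * b) = emb a * emb b"
  and emb_eq_0_iff [simp]: "emb a = 0 \<longleftrightarrow> a = 0"
  by (simp_all add: emb_def Zero_fract_def One_fract_def eq_fract)

lemma emb_power: "emb (a ^ n) = emb a ^ n"
  by (induction n) (simp_all add: emb_mult)

lemma emb_in_inv_ring_cancel:
  assumes "emb (x * y) \<in> inv_ring" "y \<noteq> 0"
  shows "emb x \<in> inv_ring"
proof -
  have "emb x = emb (x * y) * (1 / emb y)"
    using assms(2) by (simp add: emb_mult)
  then show ?thesis
    using inv_ring_mult[OF assms(1) inverse_emb_in_inv_ring[OF assms(2)]] by simp
qed

lemma emb_unit_in_inv_ring:
  assumes "u dvd 1"
  shows "emb u \<in> inv_ring"
proof -
  from assms obtain v where v: "1 = u * v" by (elim dvdE)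
  then have "emb (u * v) \<in> inv_ring"
    using inv_ring_one by (metis emb_1)
  moreover have "v \<noteq> 0"
    using v by auto
  ultimately show ?thesis by (rule emb_in_inv_ring_cancel)
qed

lemma euclidean_function_ge_one:
  assumes "euclidean_function f" "b \<noteq> 0"
  shows "f 1 \<le> f b"
  using assms unfolding euclidean_function_def by (metis mult_1 one_neq_zero)

lemma euclidean_function_mult_nonunit_less:
  fixes a x :: "'a::idom"
  assumes ef: "euclidean_function f" and "x \<noteq> 0" "a \<noteq> 0" "\<not> a dvd 1"
  shows "f x < f (x * a)"
proof -
  from ef assms(2-3) obtain q r where qr: "x = x * a * q + r" and r: "r = 0 \<or> f r < f (x * a)"
    unfolding euclidean_function_def by (metis mult_eq_0_iff)
  have r_eq: "r = x * (1 - a * q)"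
    using qr by (simp add: algebra_simps)
  have "1 - a * q \<noteq> 0"
    using \<open>\<not> a dvd 1\<close> by (metis dvd_triv_left eq_iff_diff_eq_0)
  then have "r \<noteq> 0" and "f x \<le> f r"
    using ef \<open>x \<noteq> 0\<close> unfolding r_eq euclidean_function_def by auto
  with r show ?thesis by linarith
qed

lemma euclidean_function_power_nonunit_ge:
  fixes a :: "'a::idom"
  assumes ef: "euclidean_function f" and a: "a \<noteq> 0" "\<not> a dvd 1"
  shows "f 1 + int n \<le> f (a ^ n)"
proof (induction n)
  case (Suc n)
  have "f (a ^ n) < f (a ^ n * a)"
    using euclidean_function_mult_nonunit_less[OF ef _ a] a by simp
  with Suc show ?case by (simp add: mult.commute)
qed simp

lemma emb_in_inv_ring_if_nonunit_in_inv_ring: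
  fixes a b :: "'a::idom" and f :: "'a \<Rightarrow> int"
  assumes ef: "euclidean_function f" and a: "a \<noteq> 0" "\<not> a dvd 1"
    and a_in: "emb a \<in> inv_ring"
  shows "emb b \<in> inv_ring"
proof (induction b rule: measure_induct_rule[where f = "\<lambda>b. nat (f b - f 1)"])
  case (less b)
  show ?case
  proof (cases "b = 0")
    case False
    define n where "n = nat (f b - f 1)"
    have "f b \<le> f (a ^ n)"
      using euclidean_function_power_nonunit_ge[OF ef a, of n]
        euclidean_function_ge_one[OF ef False] by (simp add: n_def)
    moreover have "a ^ n \<noteq> 0" using a by simp
    ultimately obtain q r where qr: "a ^ n = b * q + r" and r: "r = 0 \<or> f r < f b"
      using ef False unfolding euclidean_function_def by (metis order.strict_iff_not)
    have "q \<noteq> 0"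
      using qr r \<open>f b \<le> f (a ^ n)\<close> \<open>a ^ n \<noteq> 0\<close> by auto
    have "emb r \<in> inv_ring"
    proof (cases "r = 0")
      case False
      then have "nat (f r - f 1) < nat (f b - f 1)"
        using r euclidean_function_ge_one[OF ef] by fastforce
      then show ?thesis by (rule less)
    qed (simp add: inv_ring_zero)
    moreover have "emb (a ^ n) \<in> inv_ring"
      unfolding emb_power using a_in by (rule inv_ring_power)
    ultimately have "emb (b * q) \<in> inv_ring"
      using inv_ring_diff qr by (metis add_diff_cancel_right' emb_diff)
    then show ?thesis using \<open>q \<noteq> 0\<close> by (rule emb_in_inv_ring_cancel)
  qed (simp add: inv_ring_zero)
qed

lemma emb_in_inv_ring_iff_unit:
  fixes a :: "'a::idom" and f :: "'a \<Rightarrow> int"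
  assumes "euclidean_function f" and "\<not> (\<forall>a::'a. emb a \<in> inv_ring)"
  shows "emb a \<in> inv_ring \<longleftrightarrow> a dvd 1 \<or> a = 0"
proof
  assume "emb a \<in> inv_ring"
  then show "a dvd 1 \<or> a = 0"
    using emb_in_inv_ring_if_nonunit_in_inv_ring[OF assms(1)] assms(2) by blast
qed (auto simp: emb_unit_in_inv_ring inv_ring_zero)

theorem proposition2p11:
  assumes "euclidean_domain TYPE('a::idom)"
    and "\<not> (\<forall>a::'a. emb a \<in> inv_ring)"
  shows "{a::'a. emb a \<in> inv_ring} = {a. a dvd 1} \<union> {0} \<and>
         0 \<in> {a::'a. a dvd 1} \<union> {0} \<and> 1 \<in> {a::'a. a dvd 1} \<union> {0} \<and>
         (\<forall>x \<in> {a::'a. a dvd 1} \<union> {0}. \<forall>y \<in> {a. a dvd 1} \<union> {0}.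
            x + y \<in> {a. a dvd 1} \<union> {0} \<and> x - y \<in> {a. a dvd 1} \<union> {0} \<and>
            x * y \<in> {a. a dvd 1} \<union> {0}) \<and>
         (\<forall>x \<in> {a::'a. a dvd 1} \<union> {0}. x \<noteq> 0 \<longrightarrow>
            (\<exists>y \<in> {a. a dvd 1} \<union> {0}. x * y = 1))"
proof -
  let ?U = "{a::'a. a dvd 1} \<union> {0}"
  obtain f :: "'a \<Rightarrow> int" where "euclidean_function f"
    using assms(1) unfolding euclidean_domain_def by blast
  then have U_eq: "{a::'a. emb a \<in> inv_ring} = ?U"
    using emb_in_inv_ring_iff_unit assms(2) by blast
  have closed: "x + y \<in> ?U \<and> x - y \<in> ?U \<and> x * y \<in> ?U" if "x \<in> ?U" "y \<in> ?U" for x y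
    using that unfolding U_eq[symmetric]
    by (simp add: emb_add emb_diff emb_mult inv_ring_add inv_ring_diff inv_ring_mult)
  have inverse: "\<exists>y \<in> ?U. x * y = 1" if "x \<in> ?U" "x \<noteq> 0" for x
  proof -
    from that obtain y where "1 = x * y" by (auto elim: dvdE)
    then show ?thesis by (metis UnI1 dvd_triv_right mem_Collect_eq)
  qed
  show ?thesis using U_eq closed inverse by auto
qed

end
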